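(* Let $\mathbb{K}$ be a perfect field, $\mathbf{u}_1,\dots,\mathbf{u}_t\in\mathbb{K}^{\mathbb{N}^n}$, and assume $J=\mathrm{ann}(\mathbf{u}_1,\dots,\mathbf{u}_t)\subset\mathbb{K}[X_1,\dots,X_n]$ is zero-dimensional. Let $B$ be an integer such that for every $j$ the minimal polynomial of $X_j$ in $\mathbb{K}[X_1,\dots,X_n]/J$ has degree at most $B$. Fix $j\in\{1,\dots,n\}$ and a finite sequence of monomials $\mathscr{B}'_{j+1}$ in $\mathbb{K}[X_{j+1},\dots,X_n]$ (with $\mathscr{B}'_{n+1}=(1)$ if $j=n$), and let $\mathscr{C}_{j+1}=\{b'X_j^k : b'\in\mathscr{B}'_{j+1},\ 0\le k\le B-1\}$. For a finite family $\mathscr{B}$ of monomials in $\mathbb{K}[X_j,\dots,X_n]$, let $\mathsf{M}_{\mathscr{B}}$ be the matrix with rows indexed by pairs $(i,b')$, $1\le i\le t$, $b'\in\mathscr{C}_{j+1}$, columns indexed by $b\in\mathscr{B}$, and entries $\langle\mathbf{u}_i\mid bb'\rangle$. Then: (i) if $\mathscr{B}$ is dependent, the right nullspace of $\mathsf{M}_{\mathscr{B}}$ is non-trivial; (ii) if moreover $j\le n-1$, $\mathscr{B}'_{j+1}=\mathscr{B}_{j+1}$ and $J_j\cap\mathbb{K}[X_{j+1},\dots,X_n]=J_{j+1}$, then conversely, if the right nullspace of $\mathsf{M}_{\mathscr{B}}$ is non-trivial, $\mathscr{B}$ is dependent.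
   Context: For $m\in\mathbb{N}^n$, $\mathbf{X}^m=X_1^{m_1}\cdots X_n^{m_n}$; for a sequence $\mathbf{u}=(u_m)_m$ and $f=\sum_m f_m\mathbf{X}^m$, $\langle\mathbf{u}\mid f\rangle=\sum_m f_mu_m$, $f\cdot\mathbf{u}=(\langle\mathbf{u}\mid\mathbf{X}^mf\rangle)_m$, $\mathrm{ann}(\mathbf{u})$ is the ideal of $f$ with $f\cdot\mathbf{u}=0$ and $\mathrm{ann}(\mathbf{u}_1,\dots,\mathbf{u}_t)=\bigcap_i\mathrm{ann}(\mathbf{u}_i)$ (the same definitions apply to sequences indexed by $\mathbb{N}^{n-j+1}$ and polynomials in $X_j,\dots,X_n$). For $j=1,\dots,n$, $\pi_j(\mathbf{u}_i)$ is the sequence indexed by $\mathbb{N}^{n-j+1}$ with $\langle\pi_j(\mathbf{u}_i)\mid(m_j,\dots,m_n)\rangle=\langle\mathbf{u}_i\mid(0,\dots,0,m_j,\dots,m_n)\rangle$, and $J_j=\mathrm{ann}(\pi_j(\mathbf{u}_1),\dots,\pi_j(\mathbf{u}_t))\subset\mathbb{K}[X_j,\dots,X_n]$. $\mathscr{B}_j$ denotes the set of standard monomials (monomial basis) of $\mathbb{K}[X_j,\dots,X_n]/J_j$ with respect to the lexicographic order $X_j>\cdots>X_n$. A family of monomials in $\mathbb{K}[X_j,\dots,X_n]$ is independent if its images in $\mathbb{K}[X_j,\dots,X_n]/J_j$ are $\mathbb{K}$-linearly independent, and dependent otherwise. *)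

theory Defs
  imports "HOL-Computational_Algebra.Polynomial"
begin

text \<open>Exponent vectors (monomials) are functions nat => nat; the monomial
  X^m in the variables X_i, i in V, is an m vanishing outside V. Multivariate polynomials
  in the variables V are finitely supported coefficient functions on such monomials.
  Sequences u in K^(N^n) are functions (nat => nat) => K (only the values on exponent
  vectors supported in {1..n} matter). The t sequences are u 1, ..., u t.\<close>

definition perfect_field :: "'a::field itself \<Rightarrow> bool" where
  "perfect_field _ \<longleftrightarrow> CHAR('a) = 0 \<or> surj (\<lambda>x::'a. x ^ CHAR('a))"

definition mons :: "nat set \<Rightarrow> (nat \<Rightarrow> nat) set" where
  "mons V = {m. \<forall>i. i \<notin> V \<longrightarrow> m i = 0}"

definition madd :: "(nat \<Rightarrow> nat) \<Rightarrow> (nat \<Rightarrow> nat) \<Rightarrow> nat \<Rightarrow> nat" where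
  "madd m k = (\<lambda>i. m i + k i)"

definition polys :: "nat set \<Rightarrow> ((nat \<Rightarrow> nat) \<Rightarrow> 'a::field) set" where
  "polys V = {f. finite {m. f m \<noteq> 0} \<and> {m. f m \<noteq> 0} \<subseteq> mons V}"

definition mono :: "(nat \<Rightarrow> nat) \<Rightarrow> (nat \<Rightarrow> nat) \<Rightarrow> 'a::field" where
  "mono m = (\<lambda>x. if x = m then 1 else 0)"

text \<open>(f . u)_m = < u | X^m f > = sum_k f_k u_(m+k).\<close>
definition act :: "((nat \<Rightarrow> nat) \<Rightarrow> 'a::field) \<Rightarrow> ((nat \<Rightarrow> nat) \<Rightarrow> 'a) \<Rightarrow> (nat \<Rightarrow> nat) \<Rightarrow> 'a" where
  "act f u m = (\<Sum>k\<in>{k. f k \<noteq> 0}. f k * u (madd m k))"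

text \<open>ann of the sequences restricted to the variables V (i.e. of their projections),
  as an ideal of K[X_i : i in V]. With V = {j..n} this is J_j; with V = {1..n} it is J.\<close>
definition ann_vars :: "nat set \<Rightarrow> nat \<Rightarrow> (nat \<Rightarrow> (nat \<Rightarrow> nat) \<Rightarrow> 'a::field)
    \<Rightarrow> ((nat \<Rightarrow> nat) \<Rightarrow> 'a) set" where
  "ann_vars V t u = {f \<in> polys V. \<forall>i\<in>{1..t}. \<forall>m\<in>mons V. act f (u i) m = 0}"

text \<open>Zero-dimensional: K[X_V]/I is finite-dimensional (finitely many monomials span it).\<close>
definition zero_dim :: "nat set \<Rightarrow> ((nat \<Rightarrow> nat) \<Rightarrow> 'a::field) set \<Rightarrow> bool" where
  "zero_dim V I \<longleftrightarrow> (\<exists>S. finite S \<and> S \<subseteq> mons V \<and>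
     (\<forall>m\<in>mons V. \<exists>c. (\<lambda>x. mono m x - (\<Sum>s\<in>S. c s * mono s x)) \<in> I))"

text \<open>p(X_j) for a univariate polynomial p.\<close>
definition var_eval :: "nat \<Rightarrow> 'a::field poly \<Rightarrow> (nat \<Rightarrow> nat) \<Rightarrow> 'a" where
  "var_eval j p = (\<lambda>m. if (\<forall>i. i \<noteq> j \<longrightarrow> m i = 0) then coeff p (m j) else 0)"

definition minpoly_deg :: "((nat \<Rightarrow> nat) \<Rightarrow> 'a::field) set \<Rightarrow> nat \<Rightarrow> nat" where
  "minpoly_deg I j = (LEAST d. \<exists>p. lead_coeff p = 1 \<and> degree p = d \<and> var_eval j p \<in> I)"

definition lincomb :: "(nat \<Rightarrow> nat) list \<Rightarrow> (nat \<Rightarrow> 'a::field) \<Rightarrow> (nat \<Rightarrow> nat) \<Rightarrow> 'a" where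
  "lincomb bs c = (\<lambda>m. \<Sum>l\<in>{l. l < length bs \<and> bs ! l = m}. c l)"

definition dependent_mod :: "((nat \<Rightarrow> nat) \<Rightarrow> 'a::field) set \<Rightarrow> (nat \<Rightarrow> nat) list \<Rightarrow> bool" where
  "dependent_mod I bs \<longleftrightarrow> (\<exists>c. (\<exists>l<length bs. c l \<noteq> 0) \<and> lincomb bs c \<in> I)"

definition lex_less :: "(nat \<Rightarrow> nat) \<Rightarrow> (nat \<Rightarrow> nat) \<Rightarrow> bool" where
  "lex_less m m' \<longleftrightarrow> (\<exists>k. (\<forall>i<k. m i = m' i) \<and> m k < m' k)"

definition lead_mon :: "((nat \<Rightarrow> nat) \<Rightarrow> 'a::zero) \<Rightarrow> nat \<Rightarrow> nat" where
  "lead_mon f = (THE m. f m \<noteq> 0 \<and> (\<forall>m'. f m' \<noteq> 0 \<longrightarrow> m' = m \<or> lex_less m' m))"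

definition mdvd :: "(nat \<Rightarrow> nat) \<Rightarrow> (nat \<Rightarrow> nat) \<Rightarrow> bool" where
  "mdvd m m' \<longleftrightarrow> (\<forall>i. m i \<le> m' i)"

definition std_mons :: "nat set \<Rightarrow> ((nat \<Rightarrow> nat) \<Rightarrow> 'a::field) set \<Rightarrow> (nat \<Rightarrow> nat) set" where
  "std_mons V I = {m \<in> mons V. \<not> (\<exists>f\<in>I. f \<noteq> (\<lambda>_. 0) \<and> mdvd (lead_mon f) m)}"

definition Cset :: "nat \<Rightarrow> nat \<Rightarrow> (nat \<Rightarrow> nat) list \<Rightarrow> (nat \<Rightarrow> nat) set" where
  "Cset j B Bp = {madd b' (\<lambda>x. if x = j then k else 0) | b' k. b' \<in> set Bp \<and> k < B}"

text \<open>Right nullspace of M_B non-trivial: a nonzero vector v indexed by the columns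
  (positions of bs) with sum_l <u_i | bs!l * b'> v_l = 0 for all rows (i,b').\<close>
definition null_nontriv :: "nat \<Rightarrow> (nat \<Rightarrow> (nat \<Rightarrow> nat) \<Rightarrow> 'a::field) \<Rightarrow> (nat \<Rightarrow> nat) set
    \<Rightarrow> (nat \<Rightarrow> nat) list \<Rightarrow> bool" where
  "null_nontriv t u C bs \<longleftrightarrow> (\<exists>v. (\<exists>l<length bs. v l \<noteq> 0) \<and>
     (\<forall>i\<in>{1..t}. \<forall>b'\<in>C. (\<Sum>l<length bs. u i (madd (bs ! l) b') * v l) = 0))"

end

theory Submission
  imports Defs
begin

text \<open>Part (i): a relation \<open>f = \<Sum> c\<^sub>l b\<^sub>l\<close> in \<open>J\<^sub>j\<close> kills every shifted sequence
  \<open>\<langle>u\<^sub>i | X\<^sup>m f\<rangle>\<close>, in particular those indexed by \<open>\<C>\<^sub>j\<^sub>+\<^sub>1\<close>, so \<open>c\<close> lies in the nullspace.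
  Part (ii): call \<open>m\<close> spanned by \<open>S\<close> if the shifted sequence \<open>k \<mapsto> u\<^sub>i(m + k)\<close> is, for all \<open>i\<close>
  simultaneously, a combination of the shifts of elements of \<open>S\<close>. Every monomial of
  \<open>K[X\<^sub>j\<^sub>+\<^sub>1,\<dots>,X\<^sub>n]\<close> is spanned by \<open>\<B>\<^sub>j\<^sub>+\<^sub>1\<close>, by lex division by leading monomials of
  \<open>J\<^sub>j\<^sub>+\<^sub>1 \<subseteq> J\<^sub>j\<close>; every power of \<open>X\<^sub>j\<close> is spanned by \<open>X\<^sub>j\<^sup>k\<close>, \<open>k < B\<close>, by the minimal
  polynomial of \<open>X\<^sub>j\<close>. Hence all monomials of \<open>K[X\<^sub>j,\<dots>,X\<^sub>n]\<close> are spanned by \<open>\<C>\<^sub>j\<^sub>+\<^sub>1\<close>, and a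
  nullspace vector, which kills the rows indexed by \<open>\<C>\<^sub>j\<^sub>+\<^sub>1\<close>, kills all shifts, i.e. gives a
  relation in \<open>J\<^sub>j\<close>.\<close>

lemma madd_commute: "madd a b = madd b a"
  by (auto simp: madd_def)

lemma madd_assoc: "madd (madd a b) c = madd a (madd b c)"
  by (auto simp: madd_def)

lemma madd_mons: "a \<in> mons V \<Longrightarrow> b \<in> mons V \<Longrightarrow> madd a b \<in> mons V"
  unfolding mons_def madd_def by auto

lemma mons_mono: "V \<subseteq> W \<Longrightarrow> mons V \<subseteq> mons W"
  unfolding mons_def by auto

definition var_mon :: "nat \<Rightarrow> nat \<Rightarrow> nat \<Rightarrow> nat" where
  "var_mon j k = (\<lambda>i. if i = j then k else 0)"

lemma var_mon_apply_self [simp]: "var_mon j k j = k"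
  by (simp add: var_mon_def)

lemma var_mon_eq_iff: "var_mon j a = var_mon j b \<longleftrightarrow> a = b"
  by (metis var_mon_apply_self)

lemma inj_var_mon: "inj (var_mon j)"
  by (rule injI) (simp add: var_mon_eq_iff)

lemma var_mon_mons: "j \<in> V \<Longrightarrow> var_mon j k \<in> mons V"
  by (auto simp: var_mon_def mons_def)

lemma madd_var_mon: "madd (var_mon j a) (var_mon j b) = var_mon j (a + b)"
  by (auto simp: var_mon_def madd_def)

lemma only_var_iff: "(\<forall>i. i \<noteq> j \<longrightarrow> x i = 0) \<longleftrightarrow> x = var_mon j (x j)"
  by (auto simp: var_mon_def fun_eq_iff)

lemma Cset_eq: "Cset j B Bp = {madd b (var_mon j k) | b k. b \<in> set Bp \<and> k < B}"
  by (simp add: Cset_def var_mon_def)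

lemma Cset_subset_mons: "set Bp \<subseteq> mons {j+1..n} \<Longrightarrow> j \<le> n \<Longrightarrow> Cset j B Bp \<subseteq> mons {j..n}"
  unfolding Cset_def mons_def madd_def by auto

lemma homogeneous_system_nontrivial_solution:
  fixes c :: "'k \<Rightarrow> 's \<Rightarrow> 'a::field"
  assumes "finite S" "finite K" "card S < card K"
  shows "\<exists>a. (\<exists>k\<in>K. a k \<noteq> 0) \<and> (\<forall>s\<in>S. (\<Sum>k\<in>K. a k * c k s) = 0)"
  using assms
proof (induction S arbitrary: K c rule: finite_induct)
  case empty
  then obtain k where "k \<in> K"
    by (metis card.empty card_gt_0_iff ex_in_conv)
  then show ?case
    by (intro exI[of _ "\<lambda>_. 1"]) auto
next
  case (insert s0 S)
  show ?case
  proof (cases "\<forall>k\<in>K. c k s0 = 0")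
    case True
    from insert.IH[of K c] insert.prems insert.hyps obtain a
      where "\<exists>k\<in>K. a k \<noteq> 0" "\<forall>s\<in>S. (\<Sum>k\<in>K. a k * c k s) = 0"
      by auto
    with True show ?thesis
      by (intro exI[of _ a]) auto
  next
    case False
    then obtain k0 where k0: "k0 \<in> K" "c k0 s0 \<noteq> 0"
      by auto
    define K' where "K' = K - {k0}"
    define c' where "c' = (\<lambda>k s. c k s - c k s0 / c k0 s0 * c k0 s)"
    have "card S < card K'"
      using insert k0 unfolding K'_def by auto
    from insert.IH[of K' c'] this insert.prems obtain a'
      where a': "\<exists>k\<in>K'. a' k \<noteq> 0" "\<forall>s\<in>S. (\<Sum>k\<in>K'. a' k * c' k s) = 0"
      unfolding K'_def by auto
    define a where "a = (\<lambda>k. if k = k0 then - (\<Sum>k\<in>K'. a' k * c k s0) / c k0 s0 else a' k)"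
    have split: "(\<Sum>k\<in>K. a k * c k s) = a k0 * c k0 s + (\<Sum>k\<in>K'. a' k * c k s)" for s
    proof -
      have "(\<Sum>k\<in>K. a k * c k s) = a k0 * c k0 s + (\<Sum>k\<in>K'. a k * c k s)"
        unfolding K'_def using k0 insert.prems by (simp add: sum.remove)
      also have "(\<Sum>k\<in>K'. a k * c k s) = (\<Sum>k\<in>K'. a' k * c k s)"
        unfolding K'_def a_def by (rule sum.cong) auto
      finally show ?thesis .
    qed
    have "(\<Sum>k\<in>K. a k * c k s) = 0" if s: "s \<in> insert s0 S" for s
    proof (cases "s = s0")
      case True
      then show ?thesis
        unfolding split by (simp add: a_def k0)
    next
      case False
      with s a' have "(\<Sum>k\<in>K'. a' k * c' k s) = 0"
        by auto
      moreover have "(\<Sum>k\<in>K'. a' k * c' k s)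
          = (\<Sum>k\<in>K'. a' k * c k s) - (\<Sum>k\<in>K'. a' k * c k s0) / c k0 s0 * c k0 s"
        unfolding c'_def
        by (simp add: algebra_simps sum_subtractf sum_distrib_left sum_divide_distrib sum_distrib_right)
      ultimately show ?thesis
        unfolding split by (simp add: a_def k0)
    qed
    moreover have "\<exists>k\<in>K. a k \<noteq> 0"
      using a' unfolding a_def K'_def by auto
    ultimately show ?thesis
      by blast
  qed
qed

subsection \<open>The lexicographic order on monomials\<close>

lemma lex_less_irrefl: "\<not> lex_less m m"
  by (auto simp: lex_less_def)

lemma lex_less_trans:
  assumes "lex_less a b" "lex_less b c"
  shows "lex_less a c"
proof -
  from assms obtain k1 k2 where
    k1: "\<forall>i<k1. a i = b i" "a k1 < b k1" and k2: "\<forall>i<k2. b i = c i" "b k2 < c k2"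
    by (auto simp: lex_less_def)
  consider "k1 < k2" | "k1 = k2" | "k2 < k1"
    by linarith
  then have "(\<forall>i<min k1 k2. a i = c i) \<and> a (min k1 k2) < c (min k1 k2)"
  proof cases
    case 1
    with k1 k2 show ?thesis by (metis min.strict_order_iff order.strict_trans)
  next
    case 2
    with k1 k2 show ?thesis by simp
  next
    case 3
    with k1 k2 show ?thesis by (metis min.strict_order_iff min.commute order.strict_trans)
  qed
  then show ?thesis
    unfolding lex_less_def by blast
qed

lemma lex_less_linear:
  assumes "a \<noteq> b"
  shows "lex_less a b \<or> lex_less b a"
proof -
  from assms obtain i where "a i \<noteq> b i"
    by auto
  define k where "k = (LEAST i. a i \<noteq> b i)"
  have "a k \<noteq> b k"
    unfolding k_def by (rule LeastI) fact
  have eq: "\<forall>i<k. a i = b i"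
    unfolding k_def using not_less_Least by blast
  show ?thesis
  proof (cases "a k < b k")
    case True
    with eq show ?thesis unfolding lex_less_def by blast
  next
    case False
    with \<open>a k \<noteq> b k\<close> have "b k < a k" by simp
    with eq show ?thesis unfolding lex_less_def by (metis)
  qed
qed

lemma lex_less_madd_right: "lex_less a b \<Longrightarrow> lex_less (madd a w) (madd b w)"
  by (auto simp: lex_less_def madd_def)

lemma finite_has_lex_max:
  "finite F \<Longrightarrow> F \<noteq> {} \<Longrightarrow> \<exists>m\<in>F. \<forall>m'\<in>F. m' = m \<or> lex_less m' m"
proof (induction F rule: finite_ne_induct)
  case (singleton x)
  then show ?case by auto
next
  case (insert x F)
  then obtain m where m: "m \<in> F" "\<forall>m'\<in>F. m' = m \<or> lex_less m' m"
    by auto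
  show ?case
  proof (cases "lex_less m x")
    case True
    with m have "\<forall>m'\<in>insert x F. m' = x \<or> lex_less m' x"
      by (auto intro: lex_less_trans)
    then show ?thesis by blast
  next
    case False
    then have "x = m \<or> lex_less x m"
      using lex_less_linear by blast
    with m show ?thesis
      by (intro bexI[of _ m]) auto
  qed
qed

lemma lead_mon_greatest:
  assumes "finite {m. f m \<noteq> 0}" "f \<noteq> (\<lambda>_. 0)"
  shows "f (lead_mon f) \<noteq> 0" and "f m' \<noteq> 0 \<Longrightarrow> m' = lead_mon f \<or> lex_less m' (lead_mon f)"
proof -
  have "{m. f m \<noteq> 0} \<noteq> {}"
    using assms(2) by auto
  then obtain m where m: "f m \<noteq> 0" "\<forall>m'. f m' \<noteq> 0 \<longrightarrow> m' = m \<or> lex_less m' m"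
    using finite_has_lex_max[OF assms(1)] by auto
  have "lead_mon f = m"
    unfolding lead_mon_def
  proof (rule the_equality)
    fix m2 assume "f m2 \<noteq> 0 \<and> (\<forall>m'. f m' \<noteq> 0 \<longrightarrow> m' = m2 \<or> lex_less m' m2)"
    with m show "m2 = m"
      using lex_less_trans lex_less_irrefl by blast
  qed (use m in blast)
  with m show "f (lead_mon f) \<noteq> 0" and "f m' \<noteq> 0 \<Longrightarrow> m' = lead_mon f \<or> lex_less m' (lead_mon f)"
    by auto
qed

lemma lex_less_imp_lex_list:
  assumes "lex_less a b" "a \<in> mons {..N}" "b \<in> mons {..N}"
  shows "(map a [0..<Suc N], map b [0..<Suc N]) \<in> lex less_than"
proof -
  from assms(1) obtain k where k: "\<forall>i<k. a i = b i" "a k < b k"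
    by (auto simp: lex_less_def)
  have "\<forall>i>N. a i = 0" "\<forall>i>N. b i = 0"
    using assms(2,3) by (auto simp: mons_def)
  with k(2) have "k \<le> N"
    by (metis not_less_zero not_le)
  then have split: "[0..<Suc N] = [0..<k] @ k # [Suc k..<Suc N]"
    using upt_add_eq_append[of 0 k "Suc N - k"] by (simp add: upt_conv_Cons)
  have "map a [0..<k] = map b [0..<k]"
    using k(1) by simp
  then have "map a [0..<Suc N] = map a [0..<k] @ a k # map a [Suc k..<Suc N]"
    and "map b [0..<Suc N] = map a [0..<k] @ b k # map b [Suc k..<Suc N]"
    by (simp_all only: split map_append list.map)
  moreover have "(a k, b k) \<in> less_than"
    using k(2) by simp
  ultimately show ?thesis
    unfolding lex_conv by auto
qed

lemma wf_lex_less_mons: "wf {(a, b). a \<in> mons {..N} \<and> b \<in> mons {..N} \<and> lex_less a b}"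
proof (rule wf_subset)
  show "wf (inv_image (lex less_than) (\<lambda>m. map m [0..<Suc N]))"
    by (intro wf_inv_image wf_lex wf_less_than)
qed (auto dest: lex_less_imp_lex_list)

lemma act_eq_sum_superset:
  assumes "finite F" "{k. f k \<noteq> 0} \<subseteq> F"
  shows "act f w m = (\<Sum>k\<in>F. f k * w (madd m k))"
  unfolding act_def by (rule sum.mono_neutral_left) (use assms in auto)

lemma lincomb_support: "{x. lincomb bs c x \<noteq> 0} \<subseteq> set bs"
proof
  fix x assume "x \<in> {x. lincomb bs c x \<noteq> 0}"
  then have "{l. l < length bs \<and> bs ! l = x} \<noteq> {}"
    unfolding lincomb_def by force
  then show "x \<in> set bs"
    by (auto simp: in_set_conv_nth)
qed

lemma act_lincomb: "act (lincomb bs c) w m = (\<Sum>l<length bs. c l * w (madd m (bs ! l)))"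
proof -
  have "act (lincomb bs c) w m = (\<Sum>x\<in>set bs. lincomb bs c x * w (madd m x))"
    by (rule act_eq_sum_superset) (simp_all add: lincomb_support)
  also have "\<dots> = (\<Sum>x\<in>set bs. \<Sum>l\<in>{l. l \<in> {..<length bs} \<and> bs ! l = x}. c l * w (madd m (bs ! l)))"
    unfolding lincomb_def by (simp add: sum_distrib_right)
  also have "\<dots> = (\<Sum>l<length bs. c l * w (madd m (bs ! l)))"
    by (rule sum.group) auto
  finally show ?thesis .
qed

lemma lincomb_polys: "set bs \<subseteq> mons V \<Longrightarrow> lincomb bs c \<in> polys V"
  unfolding polys_def using lincomb_support[of bs c] by (auto intro: finite_subset)

lemma ann_vars_sum:
  assumes "finite K" "\<forall>k\<in>K. g k \<in> ann_vars V t u"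
  shows "(\<lambda>x. \<Sum>k\<in>K. a k * g k x) \<in> ann_vars V t u"
proof -
  define F where "F = (\<Union>k\<in>K. {x. g k x \<noteq> 0})"
  have g: "finite {x. g k x \<noteq> 0}" "{x. g k x \<noteq> 0} \<subseteq> mons V" if "k \<in> K" for k
    using assms that unfolding ann_vars_def polys_def by auto
  have F: "finite F" "F \<subseteq> mons V"
    unfolding F_def using g assms(1) by auto
  have supp: "{x. (\<Sum>k\<in>K. a k * g k x) \<noteq> 0} \<subseteq> F"
  proof
    fix x assume "x \<in> {x. (\<Sum>k\<in>K. a k * g k x) \<noteq> 0}"
    then obtain k where "k \<in> K" "a k * g k x \<noteq> 0"
      by (metis (mono_tags) mem_Collect_eq sum.neutral)
    then show "x \<in> F"
      unfolding F_def by auto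
  qed
  have "act (\<lambda>x. \<Sum>k\<in>K. a k * g k x) (u i) m = 0" if "i \<in> {1..t}" "m \<in> mons V" for i m
  proof -
    have "act (\<lambda>x. \<Sum>k\<in>K. a k * g k x) (u i) m = (\<Sum>x\<in>F. (\<Sum>k\<in>K. a k * g k x) * u i (madd m x))"
      by (rule act_eq_sum_superset[OF F(1) supp])
    also have "\<dots> = (\<Sum>k\<in>K. a k * (\<Sum>x\<in>F. g k x * u i (madd m x)))"
      by (simp add: sum_distrib_right sum_distrib_left sum.swap[of _ F] mult.assoc)
    also have "\<dots> = (\<Sum>k\<in>K. a k * act (g k) (u i) m)"
      by (rule sum.cong[OF refl], subst act_eq_sum_superset[OF F(1)]) (auto simp: F_def)
    also have "\<dots> = 0"
      using assms(2) that unfolding ann_vars_def by simp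
    finally show ?thesis .
  qed
  with supp F show ?thesis
    unfolding ann_vars_def polys_def by (auto intro: finite_subset)
qed

lemma ann_vars_subset_polys: "ann_vars V t u \<subseteq> polys V"
  unfolding ann_vars_def by auto

subsection \<open>Shift spans\<close>

definition in_shift_span :: "nat \<Rightarrow> (nat \<Rightarrow> (nat \<Rightarrow> nat) \<Rightarrow> 'a::field) \<Rightarrow> (nat \<Rightarrow> nat) set
    \<Rightarrow> (nat \<Rightarrow> nat) set \<Rightarrow> (nat \<Rightarrow> nat) \<Rightarrow> bool" where
  "in_shift_span t u M S m \<longleftrightarrow> (\<exists>D d. finite D \<and> D \<subseteq> S \<and>
     (\<forall>i\<in>{1..t}. \<forall>k\<in>M. u i (madd m k) = (\<Sum>s\<in>D. d s * u i (madd s k))))"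

lemma in_shift_span_base: "m \<in> S \<Longrightarrow> in_shift_span t u M S m"
  unfolding in_shift_span_def by (intro exI[of _ "{m}"] exI[of _ "\<lambda>_. 1"]) auto

lemma in_shift_span_mono: "in_shift_span t u M S m \<Longrightarrow> S \<subseteq> S' \<Longrightarrow> in_shift_span t u M S' m"
  unfolding in_shift_span_def by blast

lemma in_shift_span_madd:
  assumes "in_shift_span t u M S m" "\<forall>k\<in>M. madd w k \<in> M"
  shows "in_shift_span t u M ((\<lambda>s. madd s w) ` S) (madd m w)"
proof -
  from assms(1) obtain D d where D: "finite D" "D \<subseteq> S"
    "\<forall>i\<in>{1..t}. \<forall>k\<in>M. u i (madd m k) = (\<Sum>s\<in>D. d s * u i (madd s k))"
    unfolding in_shift_span_def by blast
  define d' where "d' x = d (\<lambda>i. x i - w i)" for x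
  have d'_madd: "d' (madd s w) = d s" for s
    by (simp add: d'_def madd_def)
  have inj: "inj_on (\<lambda>s. madd s w) D"
    by (rule inj_onI) (auto simp: madd_def fun_eq_iff)
  show ?thesis
    unfolding in_shift_span_def
  proof (intro exI[of _ "(\<lambda>s. madd s w) ` D"] exI[of _ d'] conjI ballI)
    fix i k assume "i \<in> {1..t}" "k \<in> M"
    then have "u i (madd (madd m w) k) = (\<Sum>s\<in>D. d s * u i (madd s (madd w k)))"
      using D(3) assms(2) by (simp add: madd_assoc)
    also have "\<dots> = (\<Sum>s\<in>D. d' (madd s w) * u i (madd (madd s w) k))"
      by (simp add: madd_assoc d'_madd)
    also have "\<dots> = (\<Sum>x\<in>(\<lambda>s. madd s w) ` D. d' x * u i (madd x k))"
      by (simp add: sum.reindex[OF inj])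
    finally show "u i (madd (madd m w) k) = (\<Sum>x\<in>(\<lambda>s. madd s w) ` D. d' x * u i (madd x k))" .
  qed (use D in auto)
qed

lemma in_shift_span_trans:
  assumes "in_shift_span t u M T m" "\<forall>x\<in>T. in_shift_span t u M S x"
  shows "in_shift_span t u M S m"
proof -
  from assms(1) obtain D d where D: "finite D" "D \<subseteq> T"
    "\<forall>i\<in>{1..t}. \<forall>k\<in>M. u i (madd m k) = (\<Sum>s\<in>D. d s * u i (madd s k))"
    unfolding in_shift_span_def by blast
  from assms(2) obtain E e where E: "\<And>x. x \<in> T \<Longrightarrow> finite (E x) \<and> E x \<subseteq> S \<and>
     (\<forall>i\<in>{1..t}. \<forall>k\<in>M. u i (madd x k) = (\<Sum>s\<in>E x. e x s * u i (madd s k)))"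
    unfolding in_shift_span_def by metis
  define F where "F = (\<Union>x\<in>D. E x)"
  define f where "f y = (\<Sum>x\<in>D. d x * (if y \<in> E x then e x y else 0))" for y
  have F: "finite F" "F \<subseteq> S"
    unfolding F_def using D E by (blast, force)
  show ?thesis
    unfolding in_shift_span_def
  proof (intro exI[of _ F] exI[of _ f] conjI ballI F)
    fix i k assume ik: "i \<in> {1..t}" "k \<in> M"
    have "u i (madd m k) = (\<Sum>x\<in>D. d x * u i (madd x k))"
      using D(3) ik by blast
    also have "\<dots> = (\<Sum>x\<in>D. d x * (\<Sum>y\<in>F. (if y \<in> E x then e x y else 0) * u i (madd y k)))"
    proof (rule sum.cong[OF refl])
      fix x assume x: "x \<in> D"
      then have "E x \<subseteq> F"
        unfolding F_def by auto
      with x D(2) E[of x] ik F(1) show "d x * u i (madd x k)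
          = d x * (\<Sum>y\<in>F. (if y \<in> E x then e x y else 0) * u i (madd y k))"
        by (simp add: if_distrib[of "\<lambda>z. z * _"] sum.If_cases Int_absorb1 subset_iff cong: if_cong)
    qed
    also have "\<dots> = (\<Sum>y\<in>F. f y * u i (madd y k))"
      by (simp add: f_def sum_distrib_left sum_distrib_right sum.swap[of _ D] mult.assoc)
    finally show "u i (madd m k) = (\<Sum>y\<in>F. f y * u i (madd y k))" .
  qed
qed

lemma in_shift_span_annihilator:
  assumes "g \<in> ann_vars V t u" "g \<noteq> (\<lambda>_. 0)"
  shows "in_shift_span t u (mons V) ({x. g x \<noteq> 0} - {lead_mon g}) (lead_mon g)"
proof -
  let ?L = "lead_mon g"
  let ?S = "{x. g x \<noteq> 0} - {?L}"
  have fin: "finite {x. g x \<noteq> 0}"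
    using assms(1) unfolding ann_vars_def polys_def by auto
  have L: "g ?L \<noteq> 0"
    by (rule lead_mon_greatest[OF fin assms(2)])
  show ?thesis
    unfolding in_shift_span_def
  proof (intro exI[of _ ?S] exI[of _ "\<lambda>x. - g x / g ?L"] conjI ballI)
    fix i k assume "i \<in> {1..t}" "k \<in> mons V"
    then have "0 = act g (u i) k"
      using assms(1) unfolding ann_vars_def by auto
    also have "\<dots> = g ?L * u i (madd k ?L) + (\<Sum>x\<in>?S. g x * u i (madd k x))"
      unfolding act_def using fin L by (simp add: sum.remove)
    finally have "g ?L * u i (madd ?L k) = - (\<Sum>x\<in>?S. g x * u i (madd x k))"
      by (simp add: madd_commute eq_neg_iff_add_eq_0)
    with L have "u i (madd ?L k) = - (\<Sum>x\<in>?S. g x * u i (madd x k)) / g ?L"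
      by (simp add: field_simps)
    then show "u i (madd ?L k) = (\<Sum>x\<in>?S. - g x / g ?L * u i (madd x k))"
      by (simp add: sum_negf sum_divide_distrib)
  qed (use fin in auto)
qed

text \<open>Division by leading monomials of elements of \<open>ann_vars W\<close>, which by assumption also
  annihilate the shifts by \<open>mons V\<close>; it terminates because lex is well founded on monomials in
  finitely many variables.\<close>
lemma in_shift_span_std_mons:
  assumes "finite W" "W \<subseteq> V" and sub: "ann_vars W t u \<subseteq> ann_vars V t u"
    and m: "m \<in> mons W"
  shows "in_shift_span t u (mons V) (std_mons W (ann_vars W t u)) m"
proof -
  let ?S = "std_mons W (ann_vars W t u)"
  obtain N where "W \<subseteq> {..N}"
    using assms(1) finite_nat_iff_bounded_le by auto
  then have WN: "mons W \<subseteq> mons {..N}"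
    by (rule mons_mono)
  have WV: "mons W \<subseteq> mons V"
    using assms(2) by (rule mons_mono)
  from wf_lex_less_mons[of N] m show ?thesis
  proof (induction m rule: wf_induct_rule)
    case (less m)
    show ?case
    proof (cases "m \<in> ?S")
      case True
      then show ?thesis by (rule in_shift_span_base)
    next
      case False
      with less.prems obtain g where g: "g \<in> ann_vars W t u" "g \<noteq> (\<lambda>_. 0)" "mdvd (lead_mon g) m"
        unfolding std_mons_def by blast
      let ?L = "lead_mon g"
      let ?Sg = "{x. g x \<noteq> 0} - {?L}"
      have supp: "finite {x. g x \<noteq> 0}" "{x. g x \<noteq> 0} \<subseteq> mons W"
        using g(1) unfolding ann_vars_def polys_def by auto
      define w where "w i = m i - ?L i" for i
      have w: "w \<in> mons W"
        using less.prems unfolding w_def mons_def by auto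
      have mw: "madd ?L w = m"
        using g(3) unfolding w_def madd_def mdvd_def by (auto simp: fun_eq_iff)
      have "\<forall>k\<in>mons V. madd w k \<in> mons V"
        using w WV madd_mons by blast
      from in_shift_span_madd[OF in_shift_span_annihilator[OF subsetD[OF sub g(1)] g(2)] this]
      have "in_shift_span t u (mons V) ((\<lambda>s. madd s w) ` ?Sg) m"
        by (simp only: mw)
      moreover have "in_shift_span t u (mons V) ?S x" if "x \<in> (\<lambda>s. madd s w) ` ?Sg" for x
      proof -
        from that obtain s where s: "g s \<noteq> 0" "s \<noteq> ?L" "x = madd s w"
          by auto
        have "lex_less s ?L"
          using lead_mon_greatest(2)[OF supp(1) g(2) s(1)] s(2) by blast
        then have "lex_less x m"
          using lex_less_madd_right[of s ?L w] s(3) mw by simp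
        moreover have "x \<in> mons W"
          using s supp(2) w madd_mons by blast
        ultimately show ?thesis
          using less WN less.prems by blast
      qed
      ultimately show ?thesis
        by (blast intro: in_shift_span_trans)
    qed
  qed
qed

subsection \<open>The minimal polynomial of \<open>X\<^sub>j\<close>\<close>

lemma monic_poly_from_coeffs:
  fixes a :: "nat \<Rightarrow> 'a::field"
  assumes "finite {k. a k \<noteq> 0}" "{k. a k \<noteq> 0} \<noteq> {}"
  shows "\<exists>p c. lead_coeff p = 1 \<and> (\<forall>e. coeff p e = c * a e)"
proof -
  define D where "D = Max {k. a k \<noteq> 0}"
  have D: "a D \<noteq> 0"
    using Max_in[OF assms] unfolding D_def by auto
  have above_D: "a e = 0" if "D < e" for e
    using Max_ge[OF assms(1), of e] that unfolding D_def by force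
  define p where "p = smult (inverse (a D)) (Poly (map a [0..<Suc D]))"
  have cp: "coeff p e = inverse (a D) * a e" for e
    unfolding p_def using above_D by (simp add: nth_default_def not_le del: upt_Suc)
  have "degree p = D"
    by (rule antisym, rule degree_le) (auto simp: cp D above_D intro: le_degree)
  with cp D have "lead_coeff p = 1"
    by simp
  with cp show ?thesis
    by blast
qed

lemma sum_mono_var_mon:
  assumes "finite K"
  shows "(\<Sum>k\<in>K. f k * mono (var_mon j k) x)
    = (if x = var_mon j (x j) \<and> x j \<in> K then f (x j) else (0::'a::field))"
proof -
  have "(\<Sum>k\<in>K. f k * mono (var_mon j k) x)
      = (\<Sum>k\<in>K. if k = x j then (if x = var_mon j (x j) then f k else 0) else 0)"
    by (rule sum.cong) (auto simp: mono_def)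
  with assms show ?thesis
    by (simp add: sum.delta)
qed

text \<open>The powers \<open>X\<^sub>j\<^sup>0, \<dots>, X\<^sub>j\<^sup>|S|\<close> are linearly dependent modulo the zero-dimensional ideal,
  because each is congruent to a combination of the finitely many monomials in \<open>S\<close>.\<close>
lemma monic_var_eval_in_ann:
  assumes "zero_dim V (ann_vars V t u)" "j \<in> V"
  shows "\<exists>p. lead_coeff p = 1 \<and> var_eval j p \<in> ann_vars V t u"
proof -
  let ?J = "ann_vars V t u"
  from assms(1) obtain S where S: "finite S"
    "\<forall>m\<in>mons V. \<exists>c. (\<lambda>x. mono m x - (\<Sum>s\<in>S. c s * mono s x)) \<in> ?J"
    unfolding zero_dim_def by blast
  then have "\<forall>k. \<exists>c. (\<lambda>x. mono (var_mon j k) x - (\<Sum>s\<in>S. c s * mono s x)) \<in> ?J"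
    using var_mon_mons[OF assms(2)] by blast
  then obtain c where c: "\<And>k. (\<lambda>x. mono (var_mon j k) x - (\<Sum>s\<in>S. c k s * mono s x)) \<in> ?J"
    by metis
  define K where "K = {..card S}"
  obtain a where a: "\<exists>k\<in>K. a k \<noteq> 0" "\<forall>s\<in>S. (\<Sum>k\<in>K. a k * c k s) = 0"
    using homogeneous_system_nontrivial_solution[OF S(1), of K c] unfolding K_def by auto
  define a' where "a' k = (if k \<in> K then a k else 0)" for k
  have "finite {k. a' k \<noteq> 0}" "{k. a' k \<noteq> 0} \<noteq> {}"
    using a(1) unfolding a'_def K_def by auto
  then obtain p r where p: "lead_coeff p = 1" "\<And>e. coeff p e = r * a' e"
    using monic_poly_from_coeffs by blast
  have "(\<lambda>x. \<Sum>k\<in>K. (r * a k) * (mono (var_mon j k) x - (\<Sum>s\<in>S. c k s * mono s x))) \<in> ?J"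
    by (rule ann_vars_sum) (use c K_def in auto)
  moreover have "(\<Sum>k\<in>K. (r * a k) * (mono (var_mon j k) x - (\<Sum>s\<in>S. c k s * mono s x)))
       = var_eval j p x" for x
  proof -
    have "(\<Sum>k\<in>K. (r * a k) * (mono (var_mon j k) x - (\<Sum>s\<in>S. c k s * mono s x)))
        = (\<Sum>k\<in>K. r * a k * mono (var_mon j k) x) - r * (\<Sum>s\<in>S. (\<Sum>k\<in>K. a k * c k s) * mono s x)"
      by (simp add: algebra_simps sum_subtractf sum_distrib_left sum_distrib_right sum.swap[of _ K])
    also have "\<dots> = (\<Sum>k\<in>K. r * a k * mono (var_mon j k) x)"
      using a(2) by simp
    also have "\<dots> = (if x = var_mon j (x j) \<and> x j \<in> K then r * a (x j) else 0)"
      by (simp add: K_def sum_mono_var_mon)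
    also have "\<dots> = var_eval j p x"
      by (simp add: var_eval_def only_var_iff p(2) a'_def)
    finally show ?thesis .
  qed
  ultimately show ?thesis
    using p(1) by auto
qed

lemma minpoly_deg_witness:
  assumes "zero_dim V (ann_vars V t u)" "j \<in> V"
  shows "\<exists>p. lead_coeff p = 1 \<and> degree p = minpoly_deg (ann_vars V t u) j
    \<and> var_eval j p \<in> ann_vars V t u"
  unfolding minpoly_deg_def
  by (rule LeastI_ex) (use monic_var_eval_in_ann[OF assms] in blast)

lemma var_eval_var_mon: "var_eval j p (var_mon j e) = coeff p e"
  by (simp add: var_eval_def var_mon_def)

lemma act_var_eval:
  assumes "var_eval j p \<in> ann_vars V t u" "i \<in> {1..t}" "k \<in> mons V"
  shows "(\<Sum>e\<le>degree p. coeff p e * u i (madd k (var_mon j e))) = 0"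
proof -
  have "{x. var_eval j p x \<noteq> 0} \<subseteq> var_mon j ` {..degree p}"
  proof
    fix x assume "x \<in> {x. var_eval j p x \<noteq> 0}"
    then have "x = var_mon j (x j)" "coeff p (x j) \<noteq> 0"
      unfolding var_eval_def only_var_iff by (auto split: if_splits)
    then show "x \<in> var_mon j ` {..degree p}"
      using le_degree by blast
  qed
  then have "act (var_eval j p) (u i) k
      = (\<Sum>x\<in>var_mon j ` {..degree p}. var_eval j p x * u i (madd k x))"
    by (intro act_eq_sum_superset) simp_all
  also have "\<dots> = (\<Sum>e\<le>degree p. coeff p e * u i (madd k (var_mon j e)))"
    by (simp add: sum.reindex inj_on_subset[OF inj_var_mon] var_eval_var_mon)
  finally show ?thesis
    using assms unfolding ann_vars_def by auto
qed

lemma var_mon_in_shift_span: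
  assumes ev: "var_eval j p \<in> ann_vars V t u" and lc: "lead_coeff p = 1"
    and dB: "degree p \<le> B" and "W \<subseteq> V" "j \<in> W"
  shows "in_shift_span t u (mons W) (var_mon j ` {..<B}) (var_mon j a)"
proof -
  let ?M = "mons W"
  let ?d = "degree p"
  have top: "in_shift_span t u ?M (var_mon j ` {..<?d}) (var_mon j ?d)"
    unfolding in_shift_span_def
  proof (intro exI[of _ "var_mon j ` {..<?d}"] exI[of _ "\<lambda>s. - coeff p (s j)"] conjI ballI)
    fix i k assume "i \<in> {1..t}" "k \<in> ?M"
    then have "0 = (\<Sum>e\<le>?d. coeff p e * u i (madd k (var_mon j e)))"
      using act_var_eval[OF ev] mons_mono[OF assms(4)] by auto
    also have "\<dots> = (\<Sum>e<?d. coeff p e * u i (madd k (var_mon j e))) + u i (madd k (var_mon j ?d))"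
      using lc by (simp add: lessThan_Suc_atMost[symmetric])
    finally have "u i (madd (var_mon j ?d) k) = - (\<Sum>e<?d. coeff p e * u i (madd (var_mon j e) k))"
      by (simp add: madd_commute eq_neg_iff_add_eq_0 add.commute)
    also have "\<dots> = (\<Sum>s\<in>var_mon j ` {..<?d}. - coeff p (s j) * u i (madd s k))"
      by (simp add: sum_negf sum.reindex inj_on_subset[OF inj_var_mon])
    finally show "u i (madd (var_mon j ?d) k)
        = (\<Sum>s\<in>var_mon j ` {..<?d}. - coeff p (s j) * u i (madd s k))" .
  qed auto
  show ?thesis
  proof (induction a rule: less_induct)
    case (less a)
    show ?case
    proof (cases "a < ?d")
      case True
      then show ?thesis
        using dB by (intro in_shift_span_base) auto
    next
      case False
      define w where "w = var_mon j (a - ?d)"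
      have "w \<in> ?M"
        unfolding w_def using assms(5) by (rule var_mon_mons)
      then have "\<forall>k\<in>?M. madd w k \<in> ?M"
        using madd_mons by blast
      moreover have "madd (var_mon j ?d) w = var_mon j a"
        using False by (simp add: w_def madd_var_mon)
      ultimately have "in_shift_span t u ?M ((\<lambda>s. madd s w) ` var_mon j ` {..<?d}) (var_mon j a)"
        using in_shift_span_madd[OF top] by metis
      moreover have "in_shift_span t u ?M (var_mon j ` {..<B}) x"
        if "x \<in> (\<lambda>s. madd s w) ` var_mon j ` {..<?d}" for x
      proof -
        from that obtain e where "e < ?d" "x = var_mon j (e + (a - ?d))"
          by (auto simp: w_def madd_var_mon)
        with False less show ?thesis
          by simp
      qed
      ultimately show ?thesis
        by (blast intro: in_shift_span_trans)
    qed
  qed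
qed

subsection \<open>The matrix \<open>M\<^sub>B\<close>\<close>

lemma mons_in_shift_span_Cset:
  assumes "j \<le> n" and sub: "ann_vars {j+1..n} t u \<subseteq> ann_vars {j..n} t u"
    and Bp: "set Bp = std_mons {j+1..n} (ann_vars {j+1..n} t u)"
    and p: "var_eval j p \<in> ann_vars V t u" "lead_coeff p = 1" "degree p \<le> B"
    and V: "{j..n} \<subseteq> V"
    and m: "m \<in> mons {j..n}"
  shows "in_shift_span t u (mons {j..n}) (Cset j B Bp) m"
proof -
  let ?M = "mons {j..n}"
  define m' where "m' = (\<lambda>i. if i = j then 0 else m i)"
  have m'M: "m' \<in> mons {j+1..n}"
    using m unfolding m'_def mons_def by auto
  have "var_mon j (m j) \<in> ?M"
    using assms(1) by (intro var_mon_mons) auto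
  then have shift: "\<forall>k\<in>?M. madd (var_mon j (m j)) k \<in> ?M"
    using madd_mons by blast
  have "in_shift_span t u ?M (set Bp) m'"
    unfolding Bp using in_shift_span_std_mons[OF _ _ sub m'M] by auto
  from in_shift_span_madd[OF this shift]
  have "in_shift_span t u ?M ((\<lambda>s. madd s (var_mon j (m j))) ` set Bp) (madd m' (var_mon j (m j)))" .
  moreover have "madd m' (var_mon j (m j)) = m"
    unfolding m'_def var_mon_def madd_def by auto
  ultimately have "in_shift_span t u ?M ((\<lambda>s. madd s (var_mon j (m j))) ` set Bp) m"
    by simp
  moreover have "in_shift_span t u ?M (Cset j B Bp) x"
    if "x \<in> (\<lambda>s. madd s (var_mon j (m j))) ` set Bp" for x
  proof -
    from that obtain b where b: "b \<in> set Bp" "x = madd b (var_mon j (m j))"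
      by auto
    have "b \<in> ?M"
      using b(1) Bp unfolding std_mons_def mons_def by auto
    then have shift_b: "\<forall>k\<in>?M. madd b k \<in> ?M"
      using madd_mons by blast
    have "in_shift_span t u ?M (var_mon j ` {..<B}) (var_mon j (m j))"
      using var_mon_in_shift_span[OF p V] assms(1) by simp
    from in_shift_span_madd[OF this shift_b]
    have "in_shift_span t u ?M ((\<lambda>s. madd s b) ` var_mon j ` {..<B}) x"
      unfolding b(2) madd_commute[of b "var_mon j (m j)"] .
    moreover have "(\<lambda>s. madd s b) ` var_mon j ` {..<B} \<subseteq> Cset j B Bp"
    proof
      fix y assume "y \<in> (\<lambda>s. madd s b) ` var_mon j ` {..<B}"
      then obtain k where "k < B" "y = madd b (var_mon j k)"
        using madd_commute by blast
      with b(1) show "y \<in> Cset j B Bp"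
        unfolding Cset_eq by blast
    qed
    ultimately show ?thesis
      by (rule in_shift_span_mono)
  qed
  ultimately show ?thesis
    by (blast intro: in_shift_span_trans)
qed

lemma dependent_mod_imp_null_nontriv:
  assumes "C \<subseteq> mons V" "dependent_mod (ann_vars V t u) bs"
  shows "null_nontriv t u C bs"
proof -
  from assms(2) obtain c where c: "\<exists>l<length bs. c l \<noteq> 0" "lincomb bs c \<in> ann_vars V t u"
    unfolding dependent_mod_def by blast
  then have ann: "\<forall>i\<in>{1..t}. \<forall>m\<in>mons V. act (lincomb bs c) (u i) m = 0"
    unfolding ann_vars_def by blast
  have "(\<Sum>l<length bs. u i (madd (bs ! l) b') * c l) = 0" if "i \<in> {1..t}" "b' \<in> C" for i b'
  proof -
    have "(\<Sum>l<length bs. u i (madd (bs ! l) b') * c l) = act (lincomb bs c) (u i) b'"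
      unfolding act_lincomb by (simp add: madd_commute mult.commute)
    with ann that assms(1) show ?thesis
      by auto
  qed
  with c(1) show ?thesis
    unfolding null_nontriv_def by blast
qed

lemma null_nontriv_imp_dependent_mod:
  assumes bs: "set bs \<subseteq> mons V" and C: "\<forall>m\<in>mons V. in_shift_span t u (mons V) C m"
    and "null_nontriv t u C bs"
  shows "dependent_mod (ann_vars V t u) bs"
proof -
  from assms(3) obtain v where v: "\<exists>l<length bs. v l \<noteq> 0"
    "\<forall>i\<in>{1..t}. \<forall>b'\<in>C. (\<Sum>l<length bs. u i (madd (bs ! l) b') * v l) = 0"
    unfolding null_nontriv_def by blast
  have "act (lincomb bs v) (u i) m = 0" if i: "i \<in> {1..t}" and m: "m \<in> mons V" for i m
  proof -
    from C m have "in_shift_span t u (mons V) C m"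
      by blast
    then obtain D d where D: "finite D" "D \<subseteq> C"
      "\<forall>i\<in>{1..t}. \<forall>k\<in>mons V. u i (madd m k) = (\<Sum>s\<in>D. d s * u i (madd s k))"
      unfolding in_shift_span_def by blast
    have "act (lincomb bs v) (u i) m = (\<Sum>l<length bs. v l * u i (madd m (bs ! l)))"
      by (rule act_lincomb)
    also have "\<dots> = (\<Sum>l<length bs. v l * (\<Sum>s\<in>D. d s * u i (madd s (bs ! l))))"
    proof (rule sum.cong[OF refl])
      fix l assume "l \<in> {..<length bs}"
      with bs have "bs ! l \<in> mons V"
        by auto
      with D(3) i show "v l * u i (madd m (bs ! l)) = v l * (\<Sum>s\<in>D. d s * u i (madd s (bs ! l)))"
        by simp
    qed
    also have "\<dots> = (\<Sum>s\<in>D. d s * (\<Sum>l<length bs. u i (madd (bs ! l) s) * v l))"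
      by (simp add: sum_distrib_left sum.swap[of _ D] madd_commute mult.commute mult.left_commute)
    also have "\<dots> = 0"
      using v(2) i D(2) by (simp add: subset_iff)
    finally show ?thesis .
  qed
  with lincomb_polys[OF bs] have "lincomb bs v \<in> ann_vars V t u"
    unfolding ann_vars_def by blast
  with v(1) show ?thesis
    unfolding dependent_mod_def by blast
qed

theorem lemma4:
  fixes u :: "nat \<Rightarrow> (nat \<Rightarrow> nat) \<Rightarrow> 'a::field"
    and n t j B :: nat
    and Bp bs :: "(nat \<Rightarrow> nat) list"
  assumes perf: "perfect_field TYPE('a)"
    and zd: "zero_dim {1..n} (ann_vars {1..n} t u)"
    and minpoly: "\<forall>j'\<in>{1..n}. minpoly_deg (ann_vars {1..n} t u) j' \<le> B"
    and j: "j \<in> {1..n}"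
    and Bp: "set Bp \<subseteq> mons {j+1..n}"
    and Bpn: "j = n \<Longrightarrow> Bp = [(\<lambda>_. 0)]"
    and bs: "set bs \<subseteq> mons {j..n}"
  shows "(dependent_mod (ann_vars {j..n} t u) bs \<longrightarrow> null_nontriv t u (Cset j B Bp) bs)
     \<and> ((j \<le> n - 1 \<and> distinct Bp \<and> set Bp = std_mons {j+1..n} (ann_vars {j+1..n} t u)
          \<and> ann_vars {j..n} t u \<inter> polys {j+1..n} = ann_vars {j+1..n} t u)
        \<longrightarrow> (null_nontriv t u (Cset j B Bp) bs \<longrightarrow> dependent_mod (ann_vars {j..n} t u) bs))"
proof (intro conjI impI)
  show "null_nontriv t u (Cset j B Bp) bs" if "dependent_mod (ann_vars {j..n} t u) bs"
    using dependent_mod_imp_null_nontriv[OF Cset_subset_mons[OF Bp] that] j by simp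
next
  assume H: "j \<le> n - 1 \<and> distinct Bp \<and> set Bp = std_mons {j+1..n} (ann_vars {j+1..n} t u)
      \<and> ann_vars {j..n} t u \<inter> polys {j+1..n} = ann_vars {j+1..n} t u"
    and "null_nontriv t u (Cset j B Bp) bs"
  then have sub: "ann_vars {j+1..n} t u \<subseteq> ann_vars {j..n} t u"
    using ann_vars_subset_polys by blast
  obtain p where "lead_coeff p = 1" "degree p \<le> B" "var_eval j p \<in> ann_vars {1..n} t u"
    using minpoly_deg_witness[OF zd j] minpoly j by fastforce
  then have "\<forall>m\<in>mons {j..n}. in_shift_span t u (mons {j..n}) (Cset j B Bp) m"
    using mons_in_shift_span_Cset[OF _ sub] H j by auto
  then show "dependent_mod (ann_vars {j..n} t u) bs"
    using null_nontriv_imp_dependent_mod bs \<open>null_nontriv t u (Cset j B Bp) bs\<close> by blast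
qed

end
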